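(* For any $n\ge2$ and $D\subseteq[n-1]$, \[ \widetilde{Q}_{n,D}(1,q,q^2,\dots;t,tq,tq^2,\dots)=\frac{1}{(q;q)_n}\sum_{S\subseteq[n]}q^{\operatorname{comaj}(D,S)}t^{|S|}, \] i.e. the specialization $x_i=q^{i-1}$, $y_i=tq^{i-1}$ of $\widetilde{Q}_{n,D}(\mathbf{x};\mathbf{y})$ is as shown, where $(q;q)_n=(1-q)(1-q^2)\cdots(1-q^n)$.
   Context: Let $\mathcal{A}_+=\{1,2,\dots\}$, $\mathcal{A}_-=\{\bar1,\bar2,\dots\}$, and $\mathcal{A}=\mathcal{A}_+\sqcup\mathcal{A}_-$ totally ordered as $1<\bar1<2<\bar2<\cdots$. Set $z_a=x_a$ for $a\in\mathcal{A}_+$ and $z_{\bar b}=y_b$. The super quasisymmetric function is \[ \widetilde{Q}_{n,D}(\mathbf{x};\mathbf{y})=\sum z_{a_1}z_{a_2}\cdots z_{a_n}, \] summed over weakly increasing sequences $a_1\le\cdots\le a_n$ in $\mathcal{A}$ such that $a_i=a_{i+1}\in\mathcal{A}_+$ implies $i\notin D$ and $a_i=a_{i+1}\in\mathcal{A}_-$ implies $i\in D$. For $D\subseteq[n-1]$, $S\subseteq[n]$, the relative comajor index is $\operatorname{comaj}(D,S)=\sum (n-i)$ over all $1\le i\le n-1$ such that either ($i\in D$ and $i+1\notin S$) or ($i\notin D$ and $i\in S$). *)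

theory Defs
  imports "HOL-Analysis.Analysis"
begin

text \<open>The alphabet: Pos i is the letter i of A_+, Neg i is the barred letter of A_-
  (only indices i \<ge> 1 are letters). The total order 1 < 1bar < 2 < 2bar < ...
  is given via the rank function.\<close>
datatype letter = Pos nat | Neg nat

fun letter_idx :: "letter \<Rightarrow> nat" where
  "letter_idx (Pos i) = i" | "letter_idx (Neg i) = i"

fun letter_rank :: "letter \<Rightarrow> nat" where
  "letter_rank (Pos i) = 2 * i" | "letter_rank (Neg i) = 2 * i + 1"

definition letter_le :: "letter \<Rightarrow> letter \<Rightarrow> bool" where
  "letter_le a b \<longleftrightarrow> letter_rank a \<le> letter_rank b"

fun is_pos :: "letter \<Rightarrow> bool" where
  "is_pos (Pos _) = True" | "is_pos (Neg _) = False"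

definition alphabet :: "letter set" where
  "alphabet = {a. letter_idx a \<ge> 1}"

text \<open>Sequences a_1 ... a_n are lists of length n, with a_i = as ! (i - 1).
  The index set of the super quasisymmetric function Q~_{n,D}.\<close>
definition super_seqs :: "nat \<Rightarrow> nat set \<Rightarrow> letter list set" where
  "super_seqs n D = {as. length as = n \<and> set as \<subseteq> alphabet \<and>
     (\<forall>i\<in>{1..n-1}. letter_le (as ! (i - 1)) (as ! i)) \<and>
     (\<forall>i\<in>{1..n-1}. as ! (i - 1) = as ! i \<and> is_pos (as ! i) \<longrightarrow> i \<notin> D) \<and>
     (\<forall>i\<in>{1..n-1}. as ! (i - 1) = as ! i \<and> \<not> is_pos (as ! i) \<longrightarrow> i \<in> D)}"

fun z_spec :: "complex \<Rightarrow> complex \<Rightarrow> letter \<Rightarrow> complex" where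
  "z_spec q t (Pos i) = q ^ (i - 1)"
| "z_spec q t (Neg i) = t * q ^ (i - 1)"

definition monomial_spec :: "complex \<Rightarrow> complex \<Rightarrow> letter list \<Rightarrow> complex" where
  "monomial_spec q t as = (\<Prod>a\<leftarrow>as. z_spec q t a)"

definition comaj :: "nat \<Rightarrow> nat set \<Rightarrow> nat set \<Rightarrow> nat" where
  "comaj n D S = (\<Sum>i\<in>{i\<in>{1..n-1}. (i \<in> D \<and> i + 1 \<notin> S) \<or> (i \<notin> D \<and> i \<in> S)}. n - i)"

definition qpoch :: "complex \<Rightarrow> nat \<Rightarrow> complex" where
  "qpoch q n = (\<Prod>k=1..n. 1 - q ^ k)"

end

theory Submission
  imports Defs
begin

text \<open>Record a sequence in \<open>super_seqs n D\<close> by its set \<open>S\<close> of barred positions and its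
  indices \<open>m 1, ..., m n\<close>. For fixed \<open>S\<close> the defining conditions say exactly that \<open>m 1 \<ge> 1\<close>,
  that \<open>m (i+1) \<ge> m i + 1\<close> at the positions \<open>i\<close> counted by \<open>comaj n D S\<close> (those with
  \<open>strict_at D S i\<close>), and that \<open>m (i+1) \<ge> m i\<close> elsewhere. Writing every index as its least
  admissible value plus a slack \<open>c i \<ge> 0\<close> identifies these sequences with \<open>\<nat>\<^sup>n\<close>. Since \<open>c j\<close>
  raises all of \<open>m j, ..., m n\<close>, the specialised monomial becomes
  \<open>t ^ card S * q ^ comaj n D S * (\<Prod>j. (q ^ (n + 1 - j)) ^ c j)\<close>, and the product of the
  geometric series over the \<open>c j\<close> is \<open>1 / qpoch q n\<close>.\<close>

lemma has_sum_geometric: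
  fixes z :: "'a :: {real_normed_field, banach}"
  assumes "norm z < 1"
  shows "((\<lambda>k. z ^ k) has_sum (1 / (1 - z))) UNIV"
proof (rule norm_summable_imp_has_sum)
  show "summable (\<lambda>k. norm (z ^ k))"
    using assms by (simp add: norm_power summable_geometric)
  show "(\<lambda>k. z ^ k) sums (1 / (1 - z))"
    using geometric_sums[OF assms] by simp
qed

lemma has_sum_prod_PiE:
  fixes f :: "'a \<Rightarrow> 'b \<Rightarrow> 'c :: {real_normed_field, banach, second_countable_topology}"
  assumes "finite A" and "\<And>x. x \<in> A \<Longrightarrow> countable (B x)"
    and "\<And>x. x \<in> A \<Longrightarrow> (\<lambda>y. norm (f x y)) summable_on B x"
  shows "((\<lambda>g. \<Prod>x\<in>A. f x (g x)) has_sum (\<Prod>x\<in>A. infsum (f x) (B x))) (PiE A B)"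
proof -
  have "Infinite_Set_Sum.abs_summable_on (\<lambda>g. \<Prod>x\<in>A. f x (g x)) (PiE A B)"
    using assms by (intro abs_summable_on_prod_PiE) (auto simp: abs_summable_equivalent[symmetric])
  then have "(\<lambda>g. \<Prod>x\<in>A. f x (g x)) summable_on PiE A B"
    by (auto simp: abs_summable_equivalent[symmetric] intro: abs_summable_summable)
  moreover have "infsum (\<lambda>g. \<Prod>x\<in>A. f x (g x)) (PiE A B) = (\<Prod>x\<in>A. infsum (f x) (B x))"
    using assms by (intro infsum_prod_PiE_abs) auto
  ultimately show ?thesis
    by (metis has_sum_infsum)
qed

lemma sum_lessThan_strict_prefix_sums:
  fixes f :: "nat \<Rightarrow> 'a :: comm_semiring_1"
  shows "(\<Sum>k<n. \<Sum>j<k. f j) = (\<Sum>j<n. of_nat (n - Suc j) * f j)"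
proof (induction n)
  case (Suc n)
  have "of_nat (Suc n - Suc j) * f j = of_nat (n - Suc j) * f j + f j" if "j < n" for j
  proof -
    have "Suc n - Suc j = Suc (n - Suc j)"
      using that by simp
    then show ?thesis
      by (simp add: algebra_simps)
  qed
  then have "(\<Sum>j<Suc n. of_nat (Suc n - Suc j) * f j) = (\<Sum>j<n. of_nat (n - Suc j) * f j + f j)"
    by (simp add: lessThan_Suc)
  then show ?case
    using Suc by (simp add: sum.distrib)
qed simp

lemma sum_lessThan_prefix_sums:
  fixes f :: "nat \<Rightarrow> 'a :: comm_semiring_1"
  shows "(\<Sum>k<n. \<Sum>j\<le>k. f j) = (\<Sum>j<n. of_nat (n - j) * f j)"
proof -
  have "(\<Sum>k<n. \<Sum>j\<le>k. f j) = (\<Sum>k<Suc n. \<Sum>j<k. f j)"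
    by (simp add: sum.atMost_shift lessThan_Suc_atMost)
  also have "\<dots> = (\<Sum>j<Suc n. of_nat (Suc n - Suc j) * f j)"
    by (rule sum_lessThan_strict_prefix_sums)
  also have "\<dots> = (\<Sum>j<n. of_nat (n - j) * f j)"
    by (simp only: sum.lessThan_Suc) simp
  finally show ?thesis .
qed

lemma prod_if_mem_eq_power:
  fixes t :: "'a :: comm_monoid_mult"
  assumes "finite A" and "S \<subseteq> A"
  shows "(\<Prod>i\<in>A. if i \<in> S then t else 1) = t ^ card S"
proof -
  have "A \<inter> {i. i \<in> S} = S"
    using assms(2) by blast
  then show ?thesis
    using assms(1) by (simp add: prod.If_cases)
qed

text \<open>Positions are 1-based in \<open>S\<close> and \<open>strict_at\<close>, as in the paper, but 0-based in lists,
  in \<open>build_index\<close> and in the slack vector \<open>c\<close>.\<close>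

definition strict_at :: "nat set \<Rightarrow> nat set \<Rightarrow> nat \<Rightarrow> bool" where
  "strict_at D S i \<longleftrightarrow> (i \<in> D \<and> i + 1 \<notin> S) \<or> (i \<notin> D \<and> i \<in> S)"

definition barred_positions :: "nat \<Rightarrow> letter list \<Rightarrow> nat set" where
  "barred_positions n as = {i \<in> {1..n}. \<not> is_pos (as ! (i - 1))}"

definition signed_letter :: "bool \<Rightarrow> nat \<Rightarrow> letter" where
  "signed_letter barred i = (if barred then Neg i else Pos i)"

definition build_index :: "nat set \<Rightarrow> nat set \<Rightarrow> (nat \<Rightarrow> nat) \<Rightarrow> nat \<Rightarrow> nat" where
  "build_index D S c k = 1 + (\<Sum>j\<le>k. c j) + (\<Sum>j<k. of_bool (strict_at D S (Suc j)))"

definition build_seq :: "nat \<Rightarrow> nat set \<Rightarrow> nat set \<Rightarrow> (nat \<Rightarrow> nat) \<Rightarrow> letter list" where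
  "build_seq n D S c = map (\<lambda>k. signed_letter (Suc k \<in> S) (build_index D S c k)) [0..<n]"

definition slack :: "nat \<Rightarrow> nat set \<Rightarrow> letter list \<Rightarrow> nat \<Rightarrow> nat" where
  "slack n D as = restrict (\<lambda>k. letter_idx (as ! k) -
     (if k = 0 then 1
      else letter_idx (as ! (k - 1)) + of_bool (strict_at D (barred_positions n as) k))) {..<n}"

lemma letter_step_iff:
  "(letter_le a b \<and> (a = b \<and> is_pos b \<longrightarrow> i \<notin> D) \<and> (a = b \<and> \<not> is_pos b \<longrightarrow> i \<in> D)) \<longleftrightarrow>
   letter_idx a + of_bool ((i \<in> D \<and> is_pos b) \<or> (i \<notin> D \<and> \<not> is_pos a)) \<le> letter_idx b"
  by (cases a; cases b) (auto simp: letter_le_def)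

lemma strict_at_barred_positions:
  assumes "Suc k < n"
  shows "strict_at D (barred_positions n as) (Suc k) \<longleftrightarrow>
    (Suc k \<in> D \<and> is_pos (as ! Suc k)) \<or> (Suc k \<notin> D \<and> \<not> is_pos (as ! k))"
  using assms by (auto simp: strict_at_def barred_positions_def)

lemma super_seqs_iff:
  "as \<in> super_seqs n D \<longleftrightarrow> length as = n \<and> (\<forall>k<n. 1 \<le> letter_idx (as ! k)) \<and>
     (\<forall>k. Suc k < n \<longrightarrow>
        letter_idx (as ! k) + of_bool (strict_at D (barred_positions n as) (Suc k)) \<le> letter_idx (as ! Suc k))"
  (is "_ \<longleftrightarrow> ?rhs")
proof -
  have alphabet: "set as \<subseteq> alphabet \<longleftrightarrow> (\<forall>k<length as. 1 \<le> letter_idx (as ! k))"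
    by (auto simp: alphabet_def set_conv_nth)
  have steps: "(\<forall>i\<in>{1..n-1}. P (i - 1) i) \<longleftrightarrow> (\<forall>k. Suc k < n \<longrightarrow> P k (Suc k))" for P
  proof safe
    fix k assume "\<forall>i\<in>{1..n-1}. P (i - 1) i" and "Suc k < n"
    moreover have "Suc k \<in> {1..n-1}"
      using \<open>Suc k < n\<close> by auto
    ultimately show "P k (Suc k)"
      by fastforce
  next
    fix i assume "\<forall>k. Suc k < n \<longrightarrow> P k (Suc k)" and "i \<in> {1..n-1}"
    then show "P (i - 1) i"
      by (cases i) auto
  qed
  define step where "step j i \<longleftrightarrow> letter_le (as ! j) (as ! i) \<and>
     (as ! j = as ! i \<and> is_pos (as ! i) \<longrightarrow> i \<notin> D) \<and>
     (as ! j = as ! i \<and> \<not> is_pos (as ! i) \<longrightarrow> i \<in> D)" for j i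
  have "as \<in> super_seqs n D \<longleftrightarrow>
      length as = n \<and> set as \<subseteq> alphabet \<and> (\<forall>i\<in>{1..n-1}. step (i - 1) i)"
    unfolding super_seqs_def step_def by blast
  also have "\<dots> \<longleftrightarrow> length as = n \<and> (\<forall>k<n. 1 \<le> letter_idx (as ! k)) \<and>
      (\<forall>k. Suc k < n \<longrightarrow> step k (Suc k))"
    unfolding alphabet steps[of step] by auto
  also have "\<dots> \<longleftrightarrow> ?rhs"
    unfolding step_def by (simp only: letter_step_iff strict_at_barred_positions cong: imp_cong)
  finally show ?thesis .
qed

lemma build_index_0: "build_index D S c 0 = 1 + c 0"
  by (simp add: build_index_def)

lemma build_index_Suc:
  "build_index D S c (Suc k) = build_index D S c k + of_bool (strict_at D S (Suc k)) + c (Suc k)"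
  by (simp add: build_index_def)

lemma length_build_seq [simp]: "length (build_seq n D S c) = n"
  by (simp add: build_seq_def)

lemma nth_build_seq:
  "k < n \<Longrightarrow> build_seq n D S c ! k = signed_letter (Suc k \<in> S) (build_index D S c k)"
  by (simp add: build_seq_def)

lemma letter_idx_signed_letter [simp]: "letter_idx (signed_letter b i) = i"
  and is_pos_signed_letter [simp]: "is_pos (signed_letter b i) \<longleftrightarrow> \<not> b"
  by (simp_all add: signed_letter_def)

lemma barred_positions_in_Pow: "barred_positions n as \<in> Pow {1..n}"
  by (auto simp: barred_positions_def)

lemma signed_letter_letter_idx: "signed_letter (\<not> is_pos a) (letter_idx a) = a"
  by (cases a) (simp_all add: signed_letter_def)

lemma barred_positions_build_seq:
  assumes "S \<subseteq> {1..n}"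
  shows "barred_positions n (build_seq n D S c) = S"
proof -
  have "i - 1 < n \<and> Suc (i - 1) = i" if "i \<in> {1..n}" for i
    using that by auto
  then show ?thesis
    using assms by (auto simp: barred_positions_def nth_build_seq)
qed

lemma build_seq_in_super_seqs:
  assumes "S \<subseteq> {1..n}"
  shows "build_seq n D S c \<in> super_seqs n D"
proof -
  have "1 \<le> build_index D S c k" for k
    by (simp add: build_index_def)
  moreover have "build_index D S c k + of_bool (strict_at D S (Suc k)) \<le> build_index D S c (Suc k)" for k
    by (simp add: build_index_Suc)
  ultimately show ?thesis
    by (simp add: super_seqs_iff barred_positions_build_seq[OF assms] nth_build_seq)
qed

lemma build_index_slack:
  assumes "as \<in> super_seqs n D" and "k < n"
  shows "build_index D (barred_positions n as) (slack n D as) k = letter_idx (as ! k)"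
  using assms(2)
proof (induction k)
  case 0
  have "1 \<le> letter_idx (as ! 0)"
    using assms by (simp add: super_seqs_iff)
  then show ?case
    using 0 by (simp add: build_index_0 slack_def)
next
  case (Suc k)
  have "letter_idx (as ! k) + of_bool (strict_at D (barred_positions n as) (Suc k))
      \<le> letter_idx (as ! Suc k)"
    using assms(1) Suc.prems by (simp add: super_seqs_iff)
  then show ?case
    using Suc by (simp add: build_index_Suc slack_def)
qed

lemma build_seq_slack:
  assumes "as \<in> super_seqs n D"
  shows "build_seq n D (barred_positions n as) (slack n D as) = as"
proof (rule nth_equalityI)
  show "length (build_seq n D (barred_positions n as) (slack n D as)) = length as"
    using assms by (simp add: super_seqs_iff)
next
  fix k assume "k < length (build_seq n D (barred_positions n as) (slack n D as))"
  then have "k < n" by simp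
  moreover have "Suc k \<in> barred_positions n as \<longleftrightarrow> \<not> is_pos (as ! k)"
    using \<open>k < n\<close> by (simp add: barred_positions_def)
  ultimately show "build_seq n D (barred_positions n as) (slack n D as) ! k = as ! k"
    by (simp add: nth_build_seq build_index_slack[OF assms] signed_letter_letter_idx)
qed

lemma slack_build_seq:
  assumes "S \<subseteq> {1..n}" and "c \<in> {..<n} \<rightarrow>\<^sub>E UNIV"
  shows "slack n D (build_seq n D S c) = c"
proof
  fix k
  let ?idx = "\<lambda>k. letter_idx (build_seq n D S c ! k)"
  show "slack n D (build_seq n D S c) k = c k"
  proof (cases "k < n")
    case True
    show ?thesis
    proof (cases k)
      case 0
      then have "?idx k = 1 + c 0"
        using True by (simp add: nth_build_seq build_index_0)
      then show ?thesis
        using True 0 by (simp add: slack_def)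
    next
      case (Suc j)
      then have "?idx k = ?idx j + of_bool (strict_at D S k) + c k"
        using True by (simp add: nth_build_seq build_index_Suc)
      then show ?thesis
        using True Suc by (simp add: slack_def barred_positions_build_seq[OF assms(1)])
    qed
  next
    case False
    then have "c k = undefined"
      by (intro PiE_arb[OF assms(2)]) simp
    then show ?thesis
      using False by (simp add: slack_def)
  qed
qed

lemma bij_betw_build_seq:
  assumes "S \<subseteq> {1..n}"
  shows "bij_betw (build_seq n D S) ({..<n} \<rightarrow>\<^sub>E UNIV)
           {as \<in> super_seqs n D. barred_positions n as = S}"
proof (rule bij_betw_byWitness[where f' = "slack n D"])
  show "\<forall>c\<in>{..<n} \<rightarrow>\<^sub>E UNIV. slack n D (build_seq n D S c) = c"
    using slack_build_seq[OF assms] by blast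
  show "\<forall>as\<in>{as \<in> super_seqs n D. barred_positions n as = S}. build_seq n D S (slack n D as) = as"
    using build_seq_slack by blast
  show "build_seq n D S ` ({..<n} \<rightarrow>\<^sub>E UNIV) \<subseteq> {as \<in> super_seqs n D. barred_positions n as = S}"
    using build_seq_in_super_seqs[OF assms] barred_positions_build_seq[OF assms] by blast
  show "slack n D ` {as \<in> super_seqs n D. barred_positions n as = S} \<subseteq> {..<n} \<rightarrow>\<^sub>E UNIV"
    unfolding slack_def by (intro image_subsetI) (simp add: restrict_PiE_iff)
qed

lemma comaj_eq_sum: "comaj n D S = (\<Sum>k<n. (n - Suc k) * of_bool (strict_at D S (Suc k)))"
proof -
  have "comaj n D S = (\<Sum>i\<in>{1..n-1}. if strict_at D S i then n - i else 0)"
    unfolding comaj_def strict_at_def by (rule sum.inter_filter) simp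
  also have "\<dots> = (\<Sum>i\<in>{1..n-1}. (n - i) * of_bool (strict_at D S i))"
    by (intro sum.cong) simp_all
  also have "\<dots> = (\<Sum>i\<in>{1..n}. (n - i) * of_bool (strict_at D S i))"
    by (cases n) (simp_all add: sum.cl_ivl_Suc)
  also have "\<dots> = (\<Sum>k<n. (n - Suc k) * of_bool (strict_at D S (Suc k)))"
    by (simp add: sum.atLeast1_atMost_eq)
  finally show ?thesis .
qed

lemma sum_build_index:
  "(\<Sum>k<n. build_index D S c k - 1) = (\<Sum>j<n. (n - j) * c j) + comaj n D S"
proof -
  have "(\<Sum>k<n. build_index D S c k - 1) =
      (\<Sum>k<n. \<Sum>j\<le>k. c j) + (\<Sum>k<n. \<Sum>j<k. of_bool (strict_at D S (Suc j)))"
    by (simp add: build_index_def sum.distrib del: sum_of_bool_eq)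
  also have "(\<Sum>k<n. \<Sum>j\<le>k. c j) = (\<Sum>j<n. (n - j) * c j)"
    by (simp add: sum_lessThan_prefix_sums)
  also have "(\<Sum>k<n. \<Sum>j<k. of_bool (strict_at D S (Suc j))) = comaj n D S"
    by (simp only: sum_lessThan_strict_prefix_sums comaj_eq_sum of_nat_id)
  finally show ?thesis .
qed

lemma z_spec_signed_letter: "z_spec q t (signed_letter b i) = (if b then t else 1) * q ^ (i - 1)"
  by (simp add: signed_letter_def)

lemma monomial_spec_build_seq:
  assumes "S \<subseteq> {1..n}"
  shows "monomial_spec q t (build_seq n D S c) =
    t ^ card S * q ^ comaj n D S * (\<Prod>j<n. (q ^ (n - j)) ^ c j)"
proof -
  have "monomial_spec q t (build_seq n D S c) =
      (\<Prod>k<n. (if Suc k \<in> S then t else 1) * q ^ (build_index D S c k - 1))"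
    by (simp add: monomial_spec_def build_seq_def z_spec_signed_letter
        prod.distinct_set_conv_list[symmetric] atLeast0LessThan)
  also have "\<dots> = (\<Prod>i\<in>{1..n}. if i \<in> S then t else 1) * q ^ (\<Sum>k<n. build_index D S c k - 1)"
    by (simp add: prod.distrib power_sum prod.atLeast1_atMost_eq)
  also have "(\<Prod>i\<in>{1..n}. if i \<in> S then t else 1) = t ^ card S"
    using assms by (simp add: prod_if_mem_eq_power)
  also have "q ^ (\<Sum>k<n. build_index D S c k - 1) = (\<Prod>j<n. (q ^ (n - j)) ^ c j) * q ^ comaj n D S"
    by (simp only: sum_build_index power_add power_sum power_mult)
  finally show ?thesis
    by (simp only: mult_ac)
qed

lemma has_sum_qpoch_inverse:
  fixes q :: complex
  assumes "norm q < 1"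
  shows "((\<lambda>c. \<Prod>j<n. (q ^ (n - j)) ^ c j) has_sum (1 / qpoch q n)) ({..<n} \<rightarrow>\<^sub>E UNIV)"
proof -
  have small: "norm (q ^ (n - j)) < 1" if "j < n" for j
    using assms that by (simp add: norm_power power_less_one_iff)
  have "((\<lambda>c. \<Prod>j<n. (q ^ (n - j)) ^ c j) has_sum
      (\<Prod>j<n. infsum (\<lambda>k. (q ^ (n - j)) ^ k) UNIV)) ({..<n} \<rightarrow>\<^sub>E UNIV)"
  proof (rule has_sum_prod_PiE)
    fix j :: nat assume "j \<in> {..<n}"
    then have "norm (norm (q ^ (n - j))) < 1"
      using small by simp
    then show "(\<lambda>k. norm ((q ^ (n - j)) ^ k)) summable_on UNIV"
      unfolding norm_power[of "q ^ (n - j)"] by (rule has_sum_geometric[THEN has_sum_imp_summable])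
  qed simp_all
  also have "(\<Prod>j<n. infsum (\<lambda>k. (q ^ (n - j)) ^ k) UNIV) = (\<Prod>j<n. 1 / (1 - q ^ (n - j)))"
    using small by (intro prod.cong refl infsumI has_sum_geometric) simp
  also have "\<dots> = (\<Prod>k\<in>{1..n}. 1 / (1 - q ^ k))"
    by (rule prod.reindex_bij_witness[of _ "\<lambda>k. n - k" "\<lambda>k. n - k"]) auto
  also have "\<dots> = 1 / qpoch q n"
    by (simp add: qpoch_def prod_dividef)
  finally show ?thesis .
qed

lemma has_sum_monomial_spec_barred_positions:
  fixes q t :: complex
  assumes "norm q < 1" and "S \<subseteq> {1..n}"
  shows "(monomial_spec q t has_sum (t ^ card S * q ^ comaj n D S * (1 / qpoch q n)))
           {as \<in> super_seqs n D. barred_positions n as = S}"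
proof -
  have "((\<lambda>c. monomial_spec q t (build_seq n D S c)) has_sum
      (t ^ card S * q ^ comaj n D S * (1 / qpoch q n))) ({..<n} \<rightarrow>\<^sub>E UNIV)"
    unfolding monomial_spec_build_seq[OF assms(2)]
    by (intro has_sum_cmult_right has_sum_qpoch_inverse assms(1))
  then show ?thesis
    by (simp only: has_sum_reindex_bij_betw[OF bij_betw_build_seq[OF assms(2)]])
qed

theorem proposition5p9:
  fixes n :: nat and D :: "nat set" and q t :: complex
  assumes "n \<ge> 2" and "D \<subseteq> {1..n-1}" and "norm q < 1"
  shows "(monomial_spec q t has_sum
           ((1 / qpoch q n) * (\<Sum>S\<in>Pow {1..n}. q ^ comaj n D S * t ^ card S)))
         (super_seqs n D)"
proof -
  have "(monomial_spec q t has_sum (\<Sum>S\<in>Pow {1..n}. t ^ card S * q ^ comaj n D S * (1 / qpoch q n)))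
      (\<Union>S\<in>Pow {1..n}. {as \<in> super_seqs n D. barred_positions n as = S})"
    by (intro sum_has_sum has_sum_monomial_spec_barred_positions assms(3)) blast+
  also have "(\<Union>S\<in>Pow {1..n}. {as \<in> super_seqs n D. barred_positions n as = S}) = super_seqs n D"
    using barred_positions_in_Pow by blast
  also have "(\<Sum>S\<in>Pow {1..n}. t ^ card S * q ^ comaj n D S * (1 / qpoch q n)) =
      (1 / qpoch q n) * (\<Sum>S\<in>Pow {1..n}. q ^ comaj n D S * t ^ card S)"
    unfolding sum_distrib_left by (intro sum.cong refl) (simp only: mult_ac)
  finally show ?thesis .
qed

end
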